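(* Let $\beta>\alpha>0$ and let $q=(q_1,q_2,q_3,q_4)$ be a convex non-collinear central configuration of the planar Newtonian 4-body problem with masses $m_1=m_2=\beta$, $m_3=m_4=\alpha$, with $q_1,q_2,q_3,q_4$ in cyclic order around the convex quadrilateral. If $r_{23}=r_{14}$, then $\Delta_4=-\Delta_3$.
   Context: Bodies have positions $q_i\in\mathbb{R}^2$ and masses $m_i>0$; $r_{ij}=\|q_i-q_j\|$; $U(q)=\sum_{i<j}m_im_j/r_{ij}$. A configuration with distinct points and $\sum_i m_iq_i=0$ is a central configuration if $\sum_{j\neq i} m_j\frac{q_j-q_i}{r_{ij}^3}=\lambda q_i$ for all $i$ and some constant $\lambda$. "Convex non-collinear": the four points are vertices of a strictly convex quadrilateral. For $1\le i\le 4$, $|\Delta_i|$ denotes the area of the triangle formed by the three points $q_j$, $j\neq i$, and the oriented areas are $\Delta_1=-|\Delta_1|$, $\Delta_2=|\Delta_2|$, $\Delta_3=-|\Delta_3|$, $\Delta_4=|\Delta_4|$; they satisfy $\Delta_1+\Delta_2+\Delta_3+\Delta_4=0$. *)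

theory Defs
  imports "HOL-Analysis.Analysis"
begin

definition det3 :: "real^2 \<Rightarrow> real^2 \<Rightarrow> real^2 \<Rightarrow> real" where
  "det3 a b c = (b$1 - a$1) * (c$2 - a$2) - (b$2 - a$2) * (c$1 - a$1)"

definition tri_area :: "real^2 \<Rightarrow> real^2 \<Rightarrow> real^2 \<Rightarrow> real" where
  "tri_area a b c = \<bar>det3 a b c\<bar> / 2"

definition abs_Delta :: "(nat \<Rightarrow> real^2) \<Rightarrow> nat \<Rightarrow> real" where
  "abs_Delta q i = (if i = 1 then tri_area (q 2) (q 3) (q 4)
                    else if i = 2 then tri_area (q 1) (q 3) (q 4)
                    else if i = 3 then tri_area (q 1) (q 2) (q 4)
                    else tri_area (q 1) (q 2) (q 3))"

definition Delta :: "(nat \<Rightarrow> real^2) \<Rightarrow> nat \<Rightarrow> real" where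
  "Delta q i = (if even i then abs_Delta q i else - abs_Delta q i)"

definition mutual_dist :: "(nat \<Rightarrow> real^2) \<Rightarrow> nat \<Rightarrow> nat \<Rightarrow> real" where
  "mutual_dist q i j = dist (q i) (q j)"

definition central_config4 :: "(nat \<Rightarrow> real) \<Rightarrow> (nat \<Rightarrow> real^2) \<Rightarrow> bool" where
  "central_config4 m q \<longleftrightarrow>
     (\<forall>i\<in>{1..4}. \<forall>j\<in>{1..4}. i \<noteq> j \<longrightarrow> q i \<noteq> q j) \<and>
     (\<Sum>i\<in>{1..4}. m i *\<^sub>R q i) = 0 \<and>
     (\<exists>lam::real. \<forall>i\<in>{1..4}.
        (\<Sum>j\<in>{1..4} - {i}. (m j / (dist (q i) (q j)) ^ 3) *\<^sub>R (q j - q i)) = lam *\<^sub>R q i)"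

definition convex_quad_cyclic :: "(nat \<Rightarrow> real^2) \<Rightarrow> bool" where
  "convex_quad_cyclic q \<longleftrightarrow>
     (det3 (q 1) (q 2) (q 3) > 0 \<and> det3 (q 2) (q 3) (q 4) > 0 \<and>
      det3 (q 3) (q 4) (q 1) > 0 \<and> det3 (q 4) (q 1) (q 2) > 0) \<or>
     (det3 (q 1) (q 2) (q 3) < 0 \<and> det3 (q 2) (q 3) (q 4) < 0 \<and>
      det3 (q 3) (q 4) (q 1) < 0 \<and> det3 (q 4) (q 1) (q 2) < 0)"

end

theory Submission
  imports Defs
begin

text \<open>Write \<open>D\<^sub>i\<close> for twice the area of the triangle without \<open>q\<^sub>i\<close>, oriented along
  the cyclic order; by convexity all \<open>D\<^sub>i\<close> have the same sign, and
  \<open>D\<^sub>1 + D\<^sub>3 = D\<^sub>2 + D\<^sub>4\<close>. With the centre of mass at the origin, the equation for body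
  \<open>i\<close> becomes a linear dependence \<open>\<Sum>\<^sub>j m\<^sub>j (M/r\<^sub>i\<^sub>j\<^sup>3 + \<lambda>) (q\<^sub>j - q\<^sub>i) = 0\<close> among three
  plane vectors, and taking cross products expresses its weights through the \<open>D\<^sub>k\<close>.
  Because \<open>m\<^sub>3 = m\<^sub>4\<close> and \<open>r\<^sub>1\<^sub>4 = r\<^sub>2\<^sub>3\<close>, the equations of bodies 1 and 2 share the weight
  \<open>K\<close> attached to \<open>r\<^sub>1\<^sub>4 = r\<^sub>2\<^sub>3\<close>. If \<open>K \<noteq> 0\<close> they combine to \<open>D\<^sub>1 D\<^sub>4 = D\<^sub>2 D\<^sub>3\<close>, which together with the
  linear relation and the common sign forces \<open>D\<^sub>3 = D\<^sub>4\<close>. If \<open>K = 0\<close> they force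
  \<open>r\<^sub>1\<^sub>3 = r\<^sub>1\<^sub>4\<close> and \<open>r\<^sub>2\<^sub>4 = r\<^sub>2\<^sub>3\<close>, putting \<open>q\<^sub>1, q\<^sub>2\<close> on the perpendicular bisector of
  \<open>q\<^sub>3 q\<^sub>4\<close>, which convexity excludes.\<close>

lemma det3_rotate: "det3 a b c = det3 b c a"
  unfolding det3_def by algebra

lemma det3_cyclic_sum: "det3 b c d + det3 d a b = det3 c d a + det3 a b c"
  unfolding det3_def by algebra

lemma det3_linear_dependence:
  fixes p u v w :: "real^2"
  assumes "a *\<^sub>R (u - p) + b *\<^sub>R (v - p) + c *\<^sub>R (w - p) = 0"
  shows "a * det3 p u v = c * det3 p v w"
    and "b * det3 p u v = c * det3 p w u"
    and "a * det3 p w u = b * det3 p v w"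
proof -
  have "a * (u$1 - p$1) + b * (v$1 - p$1) + c * (w$1 - p$1) = 0"
    using arg_cong[OF assms, of "\<lambda>x. x $ 1"] by simp
  moreover have "a * (u$2 - p$2) + b * (v$2 - p$2) + c * (w$2 - p$2) = 0"
    using arg_cong[OF assms, of "\<lambda>x. x $ 2"] by simp
  ultimately show "a * det3 p u v = c * det3 p v w"
    and "b * det3 p u v = c * det3 p w u"
    and "a * det3 p w u = b * det3 p v w"
    unfolding det3_def by algebra+
qed

lemma dist_vec2_squared: "dist (x::real^2) y ^ 2 = (x$1 - y$1)^2 + (x$2 - y$2)^2"
  by (simp add: dist_vec_def L2_set_def sum_2 dist_real_def)

lemma det3_equidistant:
  fixes a b c d :: "real^2"
  assumes "dist a c = dist a d" and "dist b c = dist b d" and "c \<noteq> d"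
  shows "det3 a b c = - det3 a b d"
proof -
  \<comment> \<open>\<open>b - a\<close> and \<open>c + d - 2 a\<close> are both orthogonal to \<open>c - d\<close>, so their cross product \<open>s\<close> vanishes.\<close>
  define s where "s = det3 a b c + det3 a b d"
  have "(a$1 - c$1)^2 + (a$2 - c$2)^2 = (a$1 - d$1)^2 + (a$2 - d$2)^2"
    and "(b$1 - c$1)^2 + (b$2 - c$2)^2 = (b$1 - d$1)^2 + (b$2 - d$2)^2"
    using assms(1,2) by (metis dist_vec2_squared)+
  then have "s * (c$1 - d$1) = 0" and "s * (c$2 - d$2) = 0"
    unfolding s_def det3_def by algebra+
  moreover have "c$1 \<noteq> d$1 \<or> c$2 \<noteq> d$2"
    using assms(3) by (auto simp: vec_eq_iff forall_2)
  ultimately show ?thesis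
    unfolding s_def by auto
qed

lemma sum_relative_positions:
  fixes q :: "'i \<Rightarrow> 'a::real_vector"
  assumes "finite I" and "i \<in> I" and "(\<Sum>j\<in>I. m j *\<^sub>R q j) = 0"
  shows "(\<Sum>j\<in>I - {i}. m j *\<^sub>R (q j - q i)) = - (\<Sum>j\<in>I. m j) *\<^sub>R q i"
proof -
  have "(\<Sum>j\<in>I - {i}. m j *\<^sub>R (q j - q i)) = (\<Sum>j\<in>I. m j *\<^sub>R (q j - q i))"
    using assms(1,2) by (simp add: sum.remove)
  also have "\<dots> = - (\<Sum>j\<in>I. m j) *\<^sub>R q i"
    using assms(3) by (simp add: scaleR_diff_right sum_subtractf scaleR_sum_left)
  finally show ?thesis .
qed

text \<open>The constant \<open>\<lambda>\<close> of the definition is absorbed using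
  \<open>\<lambda> q\<^sub>i = -(\<lambda>/M) \<Sum>\<^sub>j m\<^sub>j (q\<^sub>j - q\<^sub>i)\<close>, valid since the centre of mass is the origin.\<close>

lemma central_config4_relative:
  assumes "central_config4 m q"
  obtains lam where "\<And>i. i \<in> {1..4} \<Longrightarrow>
    (\<Sum>j\<in>{1..4} - {i}. (m j * ((\<Sum>k\<in>{1..4}. m k) / dist (q i) (q j) ^ 3 + lam)) *\<^sub>R (q j - q i)) = 0"
proof -
  define M where "M = (\<Sum>k\<in>{1..4::nat}. m k)"
  obtain lam where lam: "\<And>i. i \<in> {1..4} \<Longrightarrow>
      (\<Sum>j\<in>{1..4} - {i}. (m j / dist (q i) (q j) ^ 3) *\<^sub>R (q j - q i)) = lam *\<^sub>R q i"
    using assms unfolding central_config4_def by blast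
  have "(\<Sum>j\<in>{1..4} - {i}. (m j * (M / dist (q i) (q j) ^ 3 + lam)) *\<^sub>R (q j - q i)) = 0"
    if "i \<in> {1..4}" for i
  proof -
    have "(\<Sum>k\<in>{1..4}. m k *\<^sub>R q k) = 0"
      using assms unfolding central_config4_def by blast
    then have rel: "(\<Sum>j\<in>{1..4} - {i}. m j *\<^sub>R (q j - q i)) = - M *\<^sub>R q i"
      using sum_relative_positions[OF _ that] unfolding M_def by simp
    have "(\<Sum>j\<in>{1..4} - {i}. (m j * (M / dist (q i) (q j) ^ 3 + lam)) *\<^sub>R (q j - q i))
        = M *\<^sub>R (\<Sum>j\<in>{1..4} - {i}. (m j / dist (q i) (q j) ^ 3) *\<^sub>R (q j - q i))
          + lam *\<^sub>R (\<Sum>j\<in>{1..4} - {i}. m j *\<^sub>R (q j - q i))"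
      by (simp add: scaleR_sum_right sum.distrib[symmetric] algebra_simps)
    also have "\<dots> = 0"
      using lam[OF that] rel by simp
    finally show ?thesis .
  qed
  then show thesis
    using that unfolding M_def by blast
qed

lemma eq_of_add_eq_of_mult_eq:
  fixes D1 D2 D3 D4 :: real
  assumes "D1 + D3 = D2 + D4" and "0 < D2 * D4" and "D1 * D4 = D2 * D3"
  shows "D3 = D4"
proof -
  have "(D2 + D4) * (D4 - D3) = 0"
    using assms(1,3) by algebra
  moreover have "D2 + D4 \<noteq> 0"
    using assms(2) by (auto simp: zero_less_mult_iff)
  ultimately show ?thesis by simp
qed

lemma det3_eq_or_degenerate_of_symmetric_equations:
  fixes q1 q2 q3 q4 :: "real^2" and \<alpha> \<beta> k12 k13 k24 K :: real
  assumes "\<alpha> \<noteq> 0"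
    and body1: "(\<beta> * k12) *\<^sub>R (q2 - q1) + (\<alpha> * k13) *\<^sub>R (q3 - q1) + (\<alpha> * K) *\<^sub>R (q4 - q1) = 0"
    and body2: "(\<beta> * k12) *\<^sub>R (q1 - q2) + (\<alpha> * K) *\<^sub>R (q3 - q2) + (\<alpha> * k24) *\<^sub>R (q4 - q2) = 0"
    and "0 < det3 q3 q4 q1 * det3 q1 q2 q3" and "0 < det3 q4 q1 q2 * det3 q1 q2 q3"
  shows "det3 q4 q1 q2 = det3 q1 q2 q3 \<or> (K = 0 \<and> k13 = 0 \<and> k24 = 0)"
proof -
  define D1 D2 D3 D4
    where "D1 = det3 q2 q3 q4" and "D2 = det3 q3 q4 q1"
      and "D3 = det3 q4 q1 q2" and "D4 = det3 q1 q2 q3"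
  have rot: "det3 q1 q3 q4 = D2" "det3 q1 q4 q2 = - D3" "det3 q2 q4 q1 = D3"
      "det3 q2 q3 q4 = D1" "det3 q2 q1 q3 = - D4" "det3 q1 q2 q3 = D4"
    unfolding D1_def D2_def D3_def D4_def det3_def by (simp_all add: algebra_simps)
  note body1_rel = det3_linear_dependence[OF body1, unfolded rot]
  note body2_rel = det3_linear_dependence[OF body2, unfolded rot]
  have nonzero: "D3 \<noteq> 0" "D4 \<noteq> 0"
    using assms(4,5) unfolding D1_def D2_def D3_def D4_def by auto
  show ?thesis
  proof (cases "K = 0")
    case True
    then have "k13 = 0" and "k24 = 0"
      using body1_rel(2) body2_rel(2) nonzero \<open>\<alpha> \<noteq> 0\<close> by simp_all
    with True show ?thesis by simp
  next
    case False
    have "\<alpha> * K * (D1 * D4) = \<alpha> * K * (D2 * D3)"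
      using body1_rel(1) body2_rel(3) by algebra
    then have "D1 * D4 = D2 * D3"
      using False \<open>\<alpha> \<noteq> 0\<close> by simp
    moreover have "D1 + D3 = D2 + D4"
      unfolding D1_def D2_def D3_def D4_def by (rule det3_cyclic_sum)
    ultimately have "D3 = D4"
      using eq_of_add_eq_of_mult_eq assms(4) unfolding D1_def D2_def D3_def D4_def by blast
    then show ?thesis
      unfolding D1_def D2_def D3_def D4_def by simp
  qed
qed

lemma convex_quad_cyclic_not_equidistant:
  assumes "convex_quad_cyclic q"
    and "dist (q 1) (q 3) = dist (q 1) (q 4)" and "dist (q 2) (q 3) = dist (q 2) (q 4)"
  shows False
proof -
  have "q 3 \<noteq> q 4"
    using assms(1) unfolding convex_quad_cyclic_def det3_def by auto
  then have "det3 (q 1) (q 2) (q 3) = - det3 (q 4) (q 1) (q 2)"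
    using det3_equidistant[OF assms(2,3)] det3_rotate[of "q 4" "q 1" "q 2"] by simp
  moreover have "0 < det3 (q 4) (q 1) (q 2) * det3 (q 1) (q 2) (q 3)"
    using assms(1) unfolding convex_quad_cyclic_def by (auto simp: zero_less_mult_iff)
  ultimately show False
    by (simp add: zero_less_mult_iff)
qed

theorem lemma4p2:
  fixes \<alpha> \<beta> :: real and m :: "nat \<Rightarrow> real" and q :: "nat \<Rightarrow> real^2"
  assumes "\<beta> > \<alpha>" and "\<alpha> > 0"
    and "m 1 = \<beta>" and "m 2 = \<beta>" and "m 3 = \<alpha>" and "m 4 = \<alpha>"
    and "central_config4 m q"
    and "convex_quad_cyclic q"
    and "mutual_dist q 2 3 = mutual_dist q 1 4"
  shows "Delta q 4 = - Delta q 3"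
proof -
  define M where "M = 2 * (\<alpha> + \<beta>)"
  have total_mass: "(\<Sum>k\<in>{1..4::nat}. m k) = M"
    using assms(3-6) by (simp add: M_def sum.atLeast_Suc_atMost numeral_eq_Suc)
  obtain lam where rel: "\<And>i. i \<in> {1..4} \<Longrightarrow>
      (\<Sum>j\<in>{1..4} - {i}. (m j * (M / dist (q i) (q j) ^ 3 + lam)) *\<^sub>R (q j - q i)) = 0"
    using central_config4_relative[OF assms(7), unfolded total_mass] by blast
  define k where "k i j = M / dist (q i) (q j) ^ 3 + lam" for i j
  have "{1..4::nat} - {1} = {2, 3, 4}" and "{1..4::nat} - {2} = {1, 3, 4}" by auto
  then have body1: "(\<beta> * k 1 2) *\<^sub>R (q 2 - q 1) + (\<alpha> * k 1 3) *\<^sub>R (q 3 - q 1)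
        + (\<alpha> * k 1 4) *\<^sub>R (q 4 - q 1) = 0"
    and body2: "(\<beta> * k 1 2) *\<^sub>R (q 1 - q 2) + (\<alpha> * k 1 4) *\<^sub>R (q 3 - q 2)
        + (\<alpha> * k 2 4) *\<^sub>R (q 4 - q 2) = 0"
    using rel[of 1] rel[of 2] assms(3-6,9)
    by (simp_all add: k_def mutual_dist_def dist_commute add.assoc)
  have signs: "0 < det3 (q 3) (q 4) (q 1) * det3 (q 1) (q 2) (q 3)"
      "0 < det3 (q 4) (q 1) (q 2) * det3 (q 1) (q 2) (q 3)"
    using assms(8) unfolding convex_quad_cyclic_def by (auto simp: zero_less_mult_iff)
  have "det3 (q 4) (q 1) (q 2) = det3 (q 1) (q 2) (q 3)"
  proof (rule ccontr)
    assume "det3 (q 4) (q 1) (q 2) \<noteq> det3 (q 1) (q 2) (q 3)"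
    then have "k 1 3 = k 1 4" and "k 2 4 = k 1 4"
      using det3_eq_or_degenerate_of_symmetric_equations[OF _ body1 body2 signs] assms(2) by auto
    moreover have "M \<noteq> 0"
      using assms(1,2) by (simp add: M_def)
    ultimately have "dist (q 1) (q 3) = dist (q 1) (q 4)" and "dist (q 2) (q 3) = dist (q 2) (q 4)"
      using assms(9) by (simp_all add: k_def mutual_dist_def power_eq_iff_eq_base)
    with assms(8) show False
      by (rule convex_quad_cyclic_not_equidistant)
  qed
  then have "det3 (q 1) (q 2) (q 4) = det3 (q 1) (q 2) (q 3)"
    using det3_rotate[of "q 4" "q 1" "q 2"] by linarith
  then show ?thesis
    unfolding Delta_def abs_Delta_def tri_area_def by simp
qed

end
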